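(* Let $\mathcal{D}\subseteq\mathbb{R}^m$ be a nonempty polyhedron, $c,d\in\mathbb{R}^m$, and $f(\delta):=\inf_{x\in\mathcal{D}}(c-\delta d)^\top x$. Assume that there exists $\delta'\in\operatorname{dom}(f)$ such that $f(\delta')=(c-\delta'd)^\top x'\le0$ for some $x'\in\mathcal{D}$ with $d^\top x'>0$. If $f$ has a root, then the optimal value of the problem $\inf\ c^\top x/d^\top x$ subject to $d^\top x>0$, $x\in\mathcal{D}$, equals the largest root of $f$ and is attained. Otherwise, this optimal value is $-\infty$.
   Context: $\operatorname{dom}(f):=\{\delta: -\infty<f(\delta)<\infty\}$. *)

theory Defs
  imports "HOL-Analysis.Analysis"
begin

definition param_val :: "(real^'m) set \<Rightarrow> real^'m \<Rightarrow> real^'m \<Rightarrow> real \<Rightarrow> ereal" where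
  "param_val D c d \<delta> = (INF x\<in>D. ereal ((c - \<delta> *\<^sub>R d) \<bullet> x))"

definition param_dom :: "(real \<Rightarrow> ereal) \<Rightarrow> real set" where
  "param_dom f = {\<delta>. - \<infinity> < f \<delta> \<and> f \<delta> < \<infinity>}"

definition frac_val :: "(real^'m) set \<Rightarrow> real^'m \<Rightarrow> real^'m \<Rightarrow> ereal" where
  "frac_val D c d = (INF x\<in>{x\<in>D. d \<bullet> x > 0}. ereal ((c \<bullet> x) / (d \<bullet> x)))"

end

theory Submission
  imports Defs
begin

text \<open>
  Every root \<delta> of f makes (c - \<delta> d)'x nonnegative on D, hence \<delta> \<le> c'x / d'x for every
  feasible x; conversely, if x* minimises the ratio with value r, moving from x* a little
  towards any x \<in> D shows (c - r d)'x \<ge> 0, so f(r) = 0. Everything thus hinges on the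
  infimum of the ratio being attained as soon as it is finite. The Charnes-Cooper substitution
  y = x / d'x, t = 1 / d'x turns the ratio into the linear objective c'y on a polyhedron,
  where a linear function bounded below attains its infimum (by induction on the dimension,
  through the facets). The points with t = 0 are recession directions of D, and the hypothesis
  on \<delta>' says precisely that along them c'y never drops below the ratio at x'.
\<close>

lemma descent_to_rel_frontier:
  fixes S :: "'a::euclidean_space set"
  assumes "closed S" "convex S" and lower: "\<And>x. x \<in> S \<Longrightarrow> L \<le> w \<bullet> x"
    and x: "x \<in> S" and y: "y \<in> S" and less: "w \<bullet> y < w \<bullet> x"
  shows "\<exists>z\<in>rel_frontier S. w \<bullet> z < w \<bullet> x"
proof -
  define p where "p t = x + t *\<^sub>R (y - x)" for t
  have wp: "w \<bullet> p t = w \<bullet> x - t * (w \<bullet> x - w \<bullet> y)" for t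
    by (simp add: p_def algebra_simps)
  define T where "T = {t. 0 \<le> t \<and> p t \<in> S}"
  have "1 \<in> T"
    using y by (simp add: T_def p_def)
  have "t \<le> (w \<bullet> x - L) / (w \<bullet> x - w \<bullet> y)" if "t \<in> T" for t
    using lower[of "p t"] that less by (simp add: T_def wp pos_le_divide_eq)
  then have "bdd_above T"
    by (rule bdd_aboveI)
  moreover have "closed T"
  proof -
    have "closed (p -` S)"
      unfolding p_def by (intro continuous_closed_vimage continuous_intros \<open>closed S\<close>)
    then show ?thesis
      by (simp add: T_def Collect_conj_eq closed_Int closed_atLeast[unfolded atLeast_def] vimage_def)
  qed
  ultimately have "Sup T \<in> T" and Sup_max: "\<And>t. t \<in> T \<Longrightarrow> t \<le> Sup T"
    using \<open>1 \<in> T\<close> closed_contains_Sup cSup_upper by blast+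
  define ts where "ts = Sup T"
  have "1 \<le> ts"
    using Sup_max \<open>1 \<in> T\<close> by (simp add: ts_def)
  have "p ts \<notin> rel_interior S"
  proof
    assume "p ts \<in> rel_interior S"
    then obtain e where "e > 1" and "(1 - e) *\<^sub>R x + e *\<^sub>R p ts \<in> S"
      using convex_rel_interior_iff[OF \<open>convex S\<close>] x by blast
    moreover have "(1 - e) *\<^sub>R x + e *\<^sub>R p ts = p (e * ts)"
      by (simp add: p_def algebra_simps)
    ultimately have "e * ts \<in> T"
      using \<open>1 \<le> ts\<close> by (simp add: T_def)
    then show False
      using Sup_max \<open>e > 1\<close> \<open>1 \<le> ts\<close> by (fastforce simp: ts_def)
  qed
  moreover have "p ts \<in> S"
    using \<open>Sup T \<in> T\<close> by (simp add: T_def ts_def)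
  moreover have "w \<bullet> p ts < w \<bullet> x"
    using \<open>1 \<le> ts\<close> less by (simp add: wp)
  ultimately show ?thesis
    using \<open>closed S\<close> by (auto simp: rel_frontier_def)
qed

lemma attains_inf_via_finite_cover:
  fixes f :: "'a \<Rightarrow> 'b::linorder"
  assumes "finite \<F>" and "\<Union>\<F> \<subseteq> S" and "S \<noteq> {}"
    and min: "\<And>F. F \<in> \<F> \<Longrightarrow> \<exists>m\<in>F. \<forall>y\<in>F. f m \<le> f y"
    and cover: "\<And>x. x \<in> S \<Longrightarrow> \<exists>z\<in>\<Union>\<F>. f z \<le> f x"
  shows "\<exists>x\<in>S. \<forall>y\<in>S. f x \<le> f y"
proof -
  obtain m where m: "\<And>F. F \<in> \<F> \<Longrightarrow> m F \<in> F \<and> (\<forall>y\<in>F. f (m F) \<le> f y)"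
    using min by metis
  define x0 where "x0 = arg_min_on f (m ` \<F>)"
  have "m ` \<F> \<noteq> {}"
    using cover \<open>S \<noteq> {}\<close> by blast
  with \<open>finite \<F>\<close> have "x0 \<in> m ` \<F>" and x0_min: "\<And>F. F \<in> \<F> \<Longrightarrow> f x0 \<le> f (m F)"
    unfolding x0_def by (auto intro: arg_min_if_finite arg_min_least)
  then have "x0 \<in> S"
    using m \<open>\<Union>\<F> \<subseteq> S\<close> by blast
  moreover have "f x0 \<le> f y" if "y \<in> S" for y
  proof -
    obtain F z where "F \<in> \<F>" "z \<in> F" "f z \<le> f y"
      using cover[OF \<open>y \<in> S\<close>] by blast
    then show ?thesis
      using m x0_min by (meson order.trans)
  qed
  ultimately show ?thesis
    by blast
qed

lemma polyhedron_inner_attains_inf: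
  fixes S :: "'a::euclidean_space set"
  assumes "polyhedron S" "S \<noteq> {}" "\<And>x. x \<in> S \<Longrightarrow> L \<le> w \<bullet> x"
  shows "\<exists>x\<in>S. \<forall>y\<in>S. w \<bullet> x \<le> w \<bullet> y"
  using assms
proof (induction "nat (aff_dim S)" arbitrary: S rule: less_induct)
  case less
  note S = \<open>polyhedron S\<close> and lower = \<open>\<And>x. x \<in> S \<Longrightarrow> L \<le> w \<bullet> x\<close>
  define \<F> where "\<F> = {F. F facet_of S}"
  show ?case
  proof (rule ccontr)
    assume no_min: "\<not> ?case"
    have "\<exists>x\<in>S. \<forall>y\<in>S. w \<bullet> x \<le> w \<bullet> y"
    proof (rule attains_inf_via_finite_cover[where f = "\<lambda>x. w \<bullet> x"])
      show "finite \<F>"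
        using finite_polyhedron_facets[OF S] by (simp add: \<F>_def)
      show "\<Union>\<F> \<subseteq> S" "S \<noteq> {}"
        using facet_of_imp_subset \<open>S \<noteq> {}\<close> by (auto simp: \<F>_def)
      show "\<exists>m\<in>F. \<forall>y\<in>F. w \<bullet> m \<le> w \<bullet> y" if "F \<in> \<F>" for F
      proof (rule less.hyps)
        have F: "F facet_of S"
          using that by (simp add: \<F>_def)
        then show "F \<noteq> {}" and "polyhedron F"
          using S face_of_polyhedron_polyhedron facet_of_def by blast+
        then show "nat (aff_dim F) < nat (aff_dim S)"
          using F aff_dim_negative_iff[of F] by (simp add: facet_of_def)
        show "L \<le> w \<bullet> x" if "x \<in> F" for x
          using F facet_of_imp_subset lower that by blast
      qed
      show "\<exists>z\<in>\<Union>\<F>. w \<bullet> z \<le> w \<bullet> x" if x: "x \<in> S" for x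
      proof -
        obtain y where "y \<in> S" "w \<bullet> y < w \<bullet> x"
          using no_min x by (meson not_le)
        then obtain z where "z \<in> rel_frontier S" "w \<bullet> z < w \<bullet> x"
          using descent_to_rel_frontier[OF polyhedron_imp_closed[OF S] polyhedron_imp_convex[OF S]]
            lower x by blast
        moreover have "z \<in> \<Union>\<F>"
          using \<open>z \<in> rel_frontier S\<close> rel_frontier_of_polyhedron[OF S] by (simp add: \<F>_def)
        ultimately show ?thesis
          using less_imp_le by blast
      qed
    qed
    with no_min show False
      by blast
  qed
qed

lemma polyhedron_as_inequalities:
  fixes D :: "'a::euclidean_space set"
  assumes "polyhedron D"
  obtains I :: "'a set set" and a b where "finite I" "D = {x. \<forall>i\<in>I. a i \<bullet> x \<le> b i}"
proof -
  obtain I where "finite I" "D = \<Inter>I" and I: "\<forall>h\<in>I. \<exists>a b. a \<noteq> 0 \<and> h = {x. a \<bullet> x \<le> b}"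
    using assms unfolding polyhedron_def by (elim exE conjE) simp
  from I obtain a b where "\<And>h. h \<in> I \<Longrightarrow> h = {x. a h \<bullet> x \<le> b h}"
    by metis
  then have "D = {x. \<forall>i\<in>I. a i \<bullet> x \<le> b i}"
    using \<open>D = \<Inter>I\<close> by auto
  with \<open>finite I\<close> show ?thesis
    by (rule that)
qed

text \<open>
  Charnes-Cooper homogenisation of {x. \<forall>i\<in>I. a i \<bullet> x \<le> b i}: a point x with d \<bullet> x > 0
  corresponds to (x / (d \<bullet> x), 1 / (d \<bullet> x)); the points with t = 0 are recession directions.
\<close>
definition charnes_cooper :: "'i set \<Rightarrow> ('i \<Rightarrow> 'a::real_inner) \<Rightarrow> ('i \<Rightarrow> real) \<Rightarrow> 'a \<Rightarrow> ('a \<times> real) set"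
  where "charnes_cooper I a b d = {(y, t). 0 \<le> t \<and> d \<bullet> y = 1 \<and> (\<forall>i\<in>I. a i \<bullet> y \<le> t * b i)}"

lemma polyhedron_charnes_cooper:
  fixes a :: "'i \<Rightarrow> 'a::euclidean_space"
  assumes "finite I"
  shows "polyhedron (charnes_cooper I a b d)"
proof -
  have "charnes_cooper I a b d =
      {p. (0, -1) \<bullet> p \<le> (0::real)} \<inter> {p. (d, 0) \<bullet> p = 1} \<inter>
      \<Inter>((\<lambda>i. {p. (a i, - b i) \<bullet> p \<le> 0}) ` I)"
    by (auto simp: charnes_cooper_def inner_Pair mult.commute)
  then show ?thesis
    using assms by (auto intro!: polyhedron_Inter simp: polyhedron_halfspace_le polyhedron_hyperplane)
qed

lemma scaled_in_charnes_cooper: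
  assumes "\<forall>i\<in>I. a i \<bullet> x \<le> b i" and "0 < d \<bullet> x"
  shows "((1 / (d \<bullet> x)) *\<^sub>R x, 1 / (d \<bullet> x)) \<in> charnes_cooper I a b d"
  using assms by (simp add: charnes_cooper_def divide_right_mono)

lemma charnes_cooper_unscale:
  assumes "(y, t) \<in> charnes_cooper I a b d" and "0 < t"
  shows "\<forall>i\<in>I. a i \<bullet> ((1 / t) *\<^sub>R y) \<le> b i" and "0 < d \<bullet> ((1 / t) *\<^sub>R y)"
    and "(c \<bullet> ((1 / t) *\<^sub>R y)) / (d \<bullet> ((1 / t) *\<^sub>R y)) = c \<bullet> y"
  using assms by (auto simp: charnes_cooper_def divide_le_eq mult.commute)

lemma charnes_cooper_recession:
  assumes "(y, 0) \<in> charnes_cooper I a b d" and "\<forall>i\<in>I. a i \<bullet> x \<le> b i"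
  shows "\<forall>i\<in>I. a i \<bullet> (x + y) \<le> b i"
  using assms by (force simp: charnes_cooper_def inner_add_right)

lemma linear_fractional_attains_inf:
  fixes D :: "'a::euclidean_space set"
  assumes "polyhedron D" and x0: "x0 \<in> D" "0 < d \<bullet> x0"
    and lower: "\<And>x. x \<in> D \<Longrightarrow> 0 < d \<bullet> x \<Longrightarrow> L \<le> (c \<bullet> x) / (d \<bullet> x)"
    and recession: "\<And>y. (\<And>x. x \<in> D \<Longrightarrow> x + y \<in> D) \<Longrightarrow> d \<bullet> y = 1 \<Longrightarrow>
                      \<exists>x\<in>D. 0 < d \<bullet> x \<and> (c \<bullet> x) / (d \<bullet> x) \<le> c \<bullet> y"
  shows "\<exists>xs\<in>D. 0 < d \<bullet> xs \<and> (\<forall>x\<in>D. 0 < d \<bullet> x \<longrightarrow> (c \<bullet> xs) / (d \<bullet> xs) \<le> (c \<bullet> x) / (d \<bullet> x))"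
proof -
  obtain I :: "'a set set" and a b where "finite I" and D: "D = {x. \<forall>i\<in>I. a i \<bullet> x \<le> b i}"
    using polyhedron_as_inequalities[OF \<open>polyhedron D\<close>] by blast
  define P where "P = charnes_cooper I a b d"
  have from_P: "\<exists>x\<in>D. 0 < d \<bullet> x \<and> (c \<bullet> x) / (d \<bullet> x) \<le> c \<bullet> y" if yt: "(y, t) \<in> P" for y t
  proof (cases "t = 0")
    case True
    then have "(y, 0) \<in> charnes_cooper I a b d"
      using yt by (simp add: P_def)
    then have "x + y \<in> D" if "x \<in> D" for x
      using charnes_cooper_recession that by (simp add: D)
    moreover have "d \<bullet> y = 1"
      using yt by (simp add: P_def charnes_cooper_def)
    ultimately show ?thesis
      using recession by blast
  next
    case False
    then have "(y, t) \<in> charnes_cooper I a b d" "0 < t"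
      using yt by (auto simp: P_def charnes_cooper_def)
    from charnes_cooper_unscale[OF this] show ?thesis
      by (intro bexI[of _ "(1 / t) *\<^sub>R y"]) (auto simp: D)
  qed
  have to_P: "((1 / (d \<bullet> x)) *\<^sub>R x, 1 / (d \<bullet> x)) \<in> P" if "x \<in> D" "0 < d \<bullet> x" for x
    using that scaled_in_charnes_cooper by (simp add: P_def D)
  have "polyhedron P"
    unfolding P_def using \<open>finite I\<close> by (rule polyhedron_charnes_cooper)
  moreover have "P \<noteq> {}"
    using to_P[OF x0] by (metis empty_iff)
  moreover have "L \<le> (c, 0) \<bullet> p" if "p \<in> P" for p
    using from_P[of "fst p" "snd p"] that lower by (simp add: inner_prod_def) (meson order.trans)
  ultimately have "\<exists>ps\<in>P. \<forall>p\<in>P. (c, 0) \<bullet> ps \<le> (c, 0) \<bullet> p"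
    by (rule polyhedron_inner_attains_inf)
  then obtain ps where "ps \<in> P" and min_P: "\<And>p. p \<in> P \<Longrightarrow> (c, 0) \<bullet> ps \<le> (c, 0) \<bullet> p"
    by blast
  have "c \<bullet> fst ps \<le> (c \<bullet> x) / (d \<bullet> x)" if "x \<in> D" "0 < d \<bullet> x" for x
    using min_P[OF to_P[OF that]] by (simp add: inner_prod_def)
  moreover obtain xs where "xs \<in> D" "0 < d \<bullet> xs" "(c \<bullet> xs) / (d \<bullet> xs) \<le> c \<bullet> fst ps"
    using from_P[of "fst ps" "snd ps"] \<open>ps \<in> P\<close> by auto
  ultimately show ?thesis
    by force
qed

lemma ratio_le_recession_direction:
  fixes c d :: "'a::real_inner"
  assumes "0 < d \<bullet> x'" and "(c - \<delta> *\<^sub>R d) \<bullet> x' \<le> 0"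
    and opt: "\<And>z. z \<in> D \<Longrightarrow> (c - \<delta> *\<^sub>R d) \<bullet> x' \<le> (c - \<delta> *\<^sub>R d) \<bullet> z"
    and "x' + y \<in> D" and "d \<bullet> y = 1"
  shows "(c \<bullet> x') / (d \<bullet> x') \<le> c \<bullet> y"
proof -
  have "(c \<bullet> x') / (d \<bullet> x') \<le> \<delta>"
    using assms(1,2) by (simp add: inner_diff_left divide_le_eq)
  also have "\<delta> \<le> c \<bullet> y"
    using opt[OF \<open>x' + y \<in> D\<close>] \<open>d \<bullet> y = 1\<close> by (simp add: inner_diff_left inner_add_right)
  finally show ?thesis .
qed

lemma inner_nonneg_at_min_ratio:
  fixes c d :: "'a::real_inner"
  assumes "convex D" and xs: "xs \<in> D" "0 < d \<bullet> xs"
    and min: "\<And>x. x \<in> D \<Longrightarrow> 0 < d \<bullet> x \<Longrightarrow> (c \<bullet> xs) / (d \<bullet> xs) \<le> (c \<bullet> x) / (d \<bullet> x)"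
    and "z \<in> D"
  shows "0 \<le> (c - ((c \<bullet> xs) / (d \<bullet> xs)) *\<^sub>R d) \<bullet> z"
proof (rule ccontr)
  define r where "r = (c \<bullet> xs) / (d \<bullet> xs)"
  define g where "g = c - r *\<^sub>R d"
  assume "\<not> 0 \<le> (c - ((c \<bullet> xs) / (d \<bullet> xs)) *\<^sub>R d) \<bullet> z"
  then have "g \<bullet> z < 0"
    by (simp add: g_def r_def)
  have "g \<bullet> xs = 0"
    using xs by (simp add: g_def r_def inner_diff_left)
  \<comment> \<open>a step towards z short enough to keep the denominator above half its value at xs\<close>
  define t where "t = (d \<bullet> xs) / (2 * (d \<bullet> xs + \<bar>d \<bullet> z\<bar>))"
  have "0 < t" "t \<le> 1"
    using xs by (auto simp: t_def divide_le_eq)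
  define y where "y = (1 - t) *\<^sub>R xs + t *\<^sub>R z"
  have "y \<in> D"
    using \<open>convex D\<close> xs \<open>z \<in> D\<close> \<open>0 < t\<close> \<open>t \<le> 1\<close> by (simp add: y_def convex_def)
  have "d \<bullet> xs / 2 = d \<bullet> xs - t * (d \<bullet> xs + \<bar>d \<bullet> z\<bar>)"
    using xs by (simp add: t_def field_simps)
  also have "\<dots> \<le> d \<bullet> y"
    using \<open>0 < t\<close> mult_nonneg_nonneg[of t "d \<bullet> z + \<bar>d \<bullet> z\<bar>"] by (simp add: y_def algebra_simps)
  finally have "0 < d \<bullet> y"
    using xs by linarith
  moreover have "g \<bullet> y < 0"
    using \<open>g \<bullet> xs = 0\<close> \<open>g \<bullet> z < 0\<close> \<open>0 < t\<close> by (simp add: y_def inner_add_right mult_pos_neg)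
  ultimately have "(c \<bullet> y) / (d \<bullet> y) < r"
    by (simp add: g_def inner_diff_left divide_less_eq)
  then show False
    using min[OF \<open>y \<in> D\<close> \<open>0 < d \<bullet> y\<close>] by (simp add: r_def)
qed

lemma param_val_le:
  "z \<in> D \<Longrightarrow> param_val D c d \<delta> \<le> ereal ((c - \<delta> *\<^sub>R d) \<bullet> z)"
  unfolding param_val_def by (rule INF_lower)

lemma param_val_root_le_ratio:
  assumes "param_val D c d \<delta> = 0" and "x \<in> D" and "0 < d \<bullet> x"
  shows "\<delta> \<le> (c \<bullet> x) / (d \<bullet> x)"
proof -
  have "0 \<le> (c - \<delta> *\<^sub>R d) \<bullet> x"
    using param_val_le[OF \<open>x \<in> D\<close>, of c d \<delta>] assms(1) by simp
  then show ?thesis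
    using \<open>0 < d \<bullet> x\<close> by (simp add: inner_diff_left le_divide_eq)
qed

lemma param_val_min_ratio_eq_0:
  assumes "convex D" and xs: "xs \<in> D" "0 < d \<bullet> xs"
    and min: "\<And>x. x \<in> D \<Longrightarrow> 0 < d \<bullet> x \<Longrightarrow> (c \<bullet> xs) / (d \<bullet> xs) \<le> (c \<bullet> x) / (d \<bullet> x)"
  shows "param_val D c d ((c \<bullet> xs) / (d \<bullet> xs)) = 0"
proof -
  define g where "g = c - ((c \<bullet> xs) / (d \<bullet> xs)) *\<^sub>R d"
  have "g \<bullet> xs = 0"
    using xs by (simp add: g_def inner_diff_left)
  moreover have "0 \<le> g \<bullet> x" if "x \<in> D" for x
    unfolding g_def using assms that by (rule inner_nonneg_at_min_ratio)
  ultimately have "(INF x\<in>D. ereal (g \<bullet> x)) = 0"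
    using xs by (intro antisym INF_greatest) (auto simp: zero_ereal_def intro: INF_lower2)
  then show ?thesis
    by (simp add: param_val_def g_def)
qed

lemma frac_val_le_ratio:
  "x \<in> D \<Longrightarrow> 0 < d \<bullet> x \<Longrightarrow> frac_val D c d \<le> ereal ((c \<bullet> x) / (d \<bullet> x))"
  unfolding frac_val_def by (rule INF_lower) simp

lemma frac_val_eq_min_ratio:
  assumes "xs \<in> D" "0 < d \<bullet> xs"
    and min: "\<And>x. x \<in> D \<Longrightarrow> 0 < d \<bullet> x \<Longrightarrow> (c \<bullet> xs) / (d \<bullet> xs) \<le> (c \<bullet> x) / (d \<bullet> x)"
  shows "frac_val D c d = ereal ((c \<bullet> xs) / (d \<bullet> xs))"
proof (rule antisym)
  show "frac_val D c d \<le> ereal ((c \<bullet> xs) / (d \<bullet> xs))"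
    using assms(1,2) by (rule frac_val_le_ratio)
  show "ereal ((c \<bullet> xs) / (d \<bullet> xs)) \<le> frac_val D c d"
    unfolding frac_val_def by (rule INF_greatest) (simp add: min)
qed

lemma frac_val_lower_bound:
  assumes "frac_val D c d \<noteq> - \<infinity>"
  obtains L where "\<And>x. x \<in> D \<Longrightarrow> 0 < d \<bullet> x \<Longrightarrow> L \<le> (c \<bullet> x) / (d \<bullet> x)"
proof (cases "frac_val D c d")
  case (real v)
  then show ?thesis
    using frac_val_le_ratio[of _ D d c] that by force
next
  case PInf
  then show ?thesis
    using frac_val_le_ratio[of _ D d c] that by force
qed (use assms in simp)

lemma min_ratio_attained:
  assumes "polyhedron D" and x': "x' \<in> D" "0 < d \<bullet> x'"
    and val: "param_val D c d \<delta> = ereal ((c - \<delta> *\<^sub>R d) \<bullet> x')" and "(c - \<delta> *\<^sub>R d) \<bullet> x' \<le> 0"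
    and lower: "\<And>x. x \<in> D \<Longrightarrow> 0 < d \<bullet> x \<Longrightarrow> L \<le> (c \<bullet> x) / (d \<bullet> x)"
  obtains xs where "xs \<in> D" "0 < d \<bullet> xs"
    "\<And>x. x \<in> D \<Longrightarrow> 0 < d \<bullet> x \<Longrightarrow> (c \<bullet> xs) / (d \<bullet> xs) \<le> (c \<bullet> x) / (d \<bullet> x)"
proof -
  have opt: "(c - \<delta> *\<^sub>R d) \<bullet> x' \<le> (c - \<delta> *\<^sub>R d) \<bullet> z" if "z \<in> D" for z
    using param_val_le[OF that, of c d \<delta>] val by simp
  have "\<exists>x\<in>D. 0 < d \<bullet> x \<and> (c \<bullet> x) / (d \<bullet> x) \<le> c \<bullet> y"
    if "\<And>x. x \<in> D \<Longrightarrow> x + y \<in> D" and "d \<bullet> y = 1" for y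
    using ratio_le_recession_direction[OF x'(2) \<open>(c - \<delta> *\<^sub>R d) \<bullet> x' \<le> 0\<close> opt] that x' by blast
  then show ?thesis
    using linear_fractional_attains_inf[OF assms(1) x' lower] that by blast
qed

theorem lemma3p9:
  fixes D :: "(real^'m) set" and c d :: "real^'m"
  assumes "polyhedron D" and "D \<noteq> {}"
    and "\<exists>\<delta>' x'. \<delta>' \<in> param_dom (param_val D c d) \<and> x' \<in> D \<and>
           param_val D c d \<delta>' = ereal ((c - \<delta>' *\<^sub>R d) \<bullet> x') \<and>
           (c - \<delta>' *\<^sub>R d) \<bullet> x' \<le> 0 \<and> d \<bullet> x' > 0"
  shows "((\<exists>\<delta>. param_val D c d \<delta> = 0) \<longrightarrow>
            (\<exists>r. param_val D c d r = 0 \<and> (\<forall>\<delta>. param_val D c d \<delta> = 0 \<longrightarrow> \<delta> \<le> r) \<and>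
                 frac_val D c d = ereal r \<and>
                 (\<exists>x\<in>D. d \<bullet> x > 0 \<and> (c \<bullet> x) / (d \<bullet> x) = r)))
       \<and> ((\<nexists>\<delta>. param_val D c d \<delta> = 0) \<longrightarrow> frac_val D c d = - \<infinity>)"
proof -
  obtain \<delta>' x' where x': "x' \<in> D" "0 < d \<bullet> x'"
    and val: "param_val D c d \<delta>' = ereal ((c - \<delta>' *\<^sub>R d) \<bullet> x')"
    and nonpos: "(c - \<delta>' *\<^sub>R d) \<bullet> x' \<le> 0"
    using assms(3) by blast
  have greatest_root: "\<exists>r. param_val D c d r = 0 \<and> (\<forall>\<delta>. param_val D c d \<delta> = 0 \<longrightarrow> \<delta> \<le> r) \<and>
      frac_val D c d = ereal r \<and> (\<exists>x\<in>D. d \<bullet> x > 0 \<and> (c \<bullet> x) / (d \<bullet> x) = r)"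
    if lower: "\<And>x. x \<in> D \<Longrightarrow> 0 < d \<bullet> x \<Longrightarrow> L \<le> (c \<bullet> x) / (d \<bullet> x)" for L
  proof -
    obtain xs where xs: "xs \<in> D" "0 < d \<bullet> xs"
      and min: "\<And>x. x \<in> D \<Longrightarrow> 0 < d \<bullet> x \<Longrightarrow> (c \<bullet> xs) / (d \<bullet> xs) \<le> (c \<bullet> x) / (d \<bullet> x)"
      using min_ratio_attained[OF assms(1) x' val nonpos lower] by blast
    show ?thesis
      using param_val_min_ratio_eq_0[OF polyhedron_imp_convex[OF assms(1)] xs min]
        param_val_root_le_ratio[OF _ xs] frac_val_eq_min_ratio[OF xs min] xs by blast
  qed
  have no_root: "frac_val D c d = - \<infinity>" if "\<nexists>\<delta>. param_val D c d \<delta> = 0"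
    using that greatest_root frac_val_lower_bound by metis
  show ?thesis
    using greatest_root param_val_root_le_ratio no_root by blast
qed

end
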